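(* Let $\varphi(x_1,\dots,x_n)$ be a formula in the language of $\mathbf{A}^{\natural}$ that has the tree property. Then for every element $b^{k}\in A^{\natural}$ there is $m\le 8$ such that $\varphi(b^{k},\dots,b^{k})=b^{m}$. Moreover, if $i\in\{1,3,4\}$, then $\varphi(b^{i},\dots,b^{i})\in\{b^1,b^3,b^4\}$.
   Context: $\mathbf{A}$ is a fixed non-trivial algebra whose set $\mathcal{F}$ of basic operations contains no constant symbols, and $h$ is a unary function on $A$. Construction of $\mathbf{A}^{\natural}$: universe is the disjoint union of eight copies $A_1,\dots,A_8$ of $A$ ($a^i$ is the copy of $a$ in $A_i$); operations: each $n$-ary $f\in\mathcal{F}$ with $f(a_1^{m_1},\dots,a_n^{m_n})=(f^{\mathbf{A}}(a_1,\dots,a_n))^5$; a ternary $\heartsuit$ with $\heartsuit(a^m,b^n,c^k)=a^1$ if $a^m=c^k$, $h(a)^5=b^n$, $m\in\{1,3,4\}$; $=a^2$ if $a^m=c^k$, $h(a)^5=b^n$, $m\in\{2,5,6,7,8\}$; $=a^4$ if $m,k\in\{1,3,4\}$ and ($a^m\ne c^k$ or $h(a)^5\ne b^n$); $=a^7$ if $\{m,k\}\cap\{2,5,6,7,8\}\ne\emptyset$ and ($a^m\ne c^k$ or $h(a)^5\ne b^n$); a unary $\Box$ with $\Box(a^m)=a^m$ for $m\in\{1,2\}$, $a^{m-1}$ for even $m\ge3$, $a^{m+1}$ for odd $m\ge3$. Subformula tree of a formula $\varphi$ of $\mathbf{A}^{\natural}$ (defined recursively): for a variable $x$, the one-node tree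 labelled $x$; for $\varphi=g(\psi_1,\dots,\psi_n)$ with $g$ a basic symbol, take the disjoint union of the subformula trees of $\psi_1,\dots,\psi_n$, relabel the root of the tree of $\psi_i$ by $\langle\psi_i,i\rangle$, and add a common new root labelled $\varphi$. A formula $\varphi$ has the tree property if every node of its subformula tree whose label is a formula with principal symbol in $\mathcal{F}$ (possibly paired with a natural number) is either equal to or has as an ancestor a node labelled $\langle\beta,2\rangle$ whose immediate predecessor (parent) is labelled $\heartsuit(\alpha,\beta,\gamma)$ or $\langle\heartsuit(\alpha,\beta,\gamma),n\rangle$ for some $n$. *)

theory Defs
  imports Main
begin

datatype 'f fterm = Var nat | Op 'f "'f fterm list"
  | Hrt "'f fterm" "'f fterm" "'f fterm" | Bx "'f fterm"

fun wf_term :: "('f \<Rightarrow> nat) \<Rightarrow> 'f fterm \<Rightarrow> bool" where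
  "wf_term ar (Var _) = True"
| "wf_term ar (Op f ts) = (length ts = ar f \<and> (\<forall>t\<in>set ts. wf_term ar t))"
| "wf_term ar (Hrt a b c) = (wf_term ar a \<and> wf_term ar b \<and> wf_term ar c)"
| "wf_term ar (Bx a) = wf_term ar a"

text \<open>Elements of A-natural: a^i is represented as (a, i) with i in {1..8}.\<close>
definition heart_op :: "('a \<Rightarrow> 'a) \<Rightarrow> 'a \<times> nat \<Rightarrow> 'a \<times> nat \<Rightarrow> 'a \<times> nat \<Rightarrow> 'a \<times> nat" where
  "heart_op h x y z = (case x of (a, m) \<Rightarrow> case z of (c, k) \<Rightarrow>
     if x = z \<and> (h a, 5) = y then (if m \<in> {1,3,4} then (a, 1) else (a, 2))
     else if m \<in> {1,3,4} \<and> k \<in> {1,3,4} then (a, 4) else (a, 7))"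

definition box_op :: "'a \<times> nat \<Rightarrow> 'a \<times> nat" where
  "box_op x = (case x of (a, m) \<Rightarrow>
     if m \<in> {1,2} then (a, m) else if even m then (a, m - 1) else (a, m + 1))"

fun eval_nat :: "('f \<Rightarrow> 'a list \<Rightarrow> 'a) \<Rightarrow> ('a \<Rightarrow> 'a) \<Rightarrow> (nat \<Rightarrow> 'a \<times> nat) \<Rightarrow> 'f fterm \<Rightarrow> 'a \<times> nat" where
  "eval_nat I h env (Var x) = env x"
| "eval_nat I h env (Op f ts) = (I f (map (\<lambda>t. fst (eval_nat I h env t)) ts), 5)"
| "eval_nat I h env (Hrt a b c) = heart_op h (eval_nat I h env a) (eval_nat I h env b) (eval_nat I h env c)"
| "eval_nat I h env (Bx a) = box_op (eval_nat I h env a)"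

text \<open>Subformula tree via positions: a node is given by the list of (1-based)
  argument indices leading to it from the root; the node at position p@[i]
  is labelled <psi, i>, its parent is the node at position p.\<close>
fun child :: "'f fterm \<Rightarrow> nat \<Rightarrow> 'f fterm option" where
  "child (Var _) i = None"
| "child (Op f ts) i = (if 1 \<le> i \<and> i \<le> length ts then Some (ts ! (i - 1)) else None)"
| "child (Hrt a b c) i = (if i = 1 then Some a else if i = 2 then Some b
                          else if i = 3 then Some c else None)"
| "child (Bx a) i = (if i = 1 then Some a else None)"

fun subterm_at :: "'f fterm \<Rightarrow> nat list \<Rightarrow> 'f fterm option" where
  "subterm_at t [] = Some t"
| "subterm_at t (i # p) = (case child t i of None \<Rightarrow> None | Some s \<Rightarrow> subterm_at s p)"

fun is_op :: "'f fterm \<Rightarrow> bool" where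
  "is_op (Op _ _) = True"
| "is_op _ = False"

fun is_hrt :: "'f fterm \<Rightarrow> bool" where
  "is_hrt (Hrt _ _ _) = True"
| "is_hrt _ = False"

text \<open>Tree property: every node whose formula has principal symbol in F is equal
  to or has as ancestor a node labelled <beta, 2> whose parent is a heart node.\<close>
definition tree_prop :: "'f fterm \<Rightarrow> bool" where
  "tree_prop \<phi> = (\<forall>p s. subterm_at \<phi> p = Some s \<and> is_op s \<longrightarrow>
      (\<exists>q r u. p = q @ [2] @ r \<and> subterm_at \<phi> q = Some u \<and> is_hrt u))"

end

theory Submission
  imports Defs
begin

text \<open>The value of \<open>\<heartsuit>(\<alpha>,\<beta>,\<gamma>)\<close> is a copy of the value of \<open>\<alpha>\<close>, and \<open>\<box>\<close> only changes the
  copy index, so the underlying element can only be altered by an operation of \<open>\<F>\<close>.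
  The tree property says that every such operation sits inside a middle argument \<open>\<beta>\<close> of
  some \<open>\<heartsuit>\<close>, and \<open>\<beta>\<close> influences only the index of the result. For the second claim, both \<open>\<heartsuit>\<close>
  and \<open>\<box>\<close> map indices in \<open>{1,3,4}\<close> to indices in \<open>{1,3,4}\<close>.\<close>

lemma tree_prop_child:
  assumes tp: "tree_prop t" and s: "child t i = Some s" and not_middle: "i = 2 \<longrightarrow> \<not> is_hrt t"
  shows "tree_prop s"
  unfolding tree_prop_def
proof (intro allI impI)
  fix p s' assume "subterm_at s p = Some s' \<and> is_op s'"
  with s have "subterm_at t (i # p) = Some s' \<and> is_op s'" by simp
  with tp obtain q r u where split: "i # p = q @ [2] @ r"
    and u: "subterm_at t q = Some u" "is_hrt u"
    unfolding tree_prop_def by blast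
  have "q \<noteq> []" using split u not_middle by auto
  with split obtain q' where q: "q = i # q'" and "p = q' @ [2] @ r"
    by (cases q) auto
  moreover have "subterm_at s q' = Some u" using u(1) s q by simp
  ultimately show "\<exists>q r u. p = q @ [2] @ r \<and> subterm_at s q = Some u \<and> is_hrt u"
    using u(2) by blast
qed

lemma not_tree_prop_Op: "\<not> tree_prop (Op f ts)"
  unfolding tree_prop_def by (auto intro!: exI[of _ "[]"])

lemma tree_prop_HrtD:
  assumes "tree_prop (Hrt a b c)"
  shows "tree_prop a" "tree_prop c"
  using tree_prop_child[OF assms, of 1 a] tree_prop_child[OF assms, of 3 c] by simp_all

lemma tree_prop_BxD: "tree_prop (Bx a) \<Longrightarrow> tree_prop a"
  using tree_prop_child[of "Bx a" 1 a] by simp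

lemma fst_heart_op [simp]: "fst (heart_op h x y z) = fst x"
  by (cases x; cases z) (simp add: heart_op_def)

lemma fst_box_op [simp]: "fst (box_op x) = fst x"
  by (cases x) (simp add: box_op_def)

lemma snd_heart_op_range: "snd (heart_op h x y z) \<in> {1..8}"
  by (cases x; cases z) (simp add: heart_op_def)

lemma snd_heart_op_134:
  "snd x \<in> {1,3,4} \<Longrightarrow> snd z \<in> {1,3,4} \<Longrightarrow> snd (heart_op h x y z) \<in> {1,3,4}"
  by (cases x; cases z) (simp add: heart_op_def)

lemma snd_box_op_range:
  assumes "snd x \<in> {1..8}"
  shows "snd (box_op x) \<in> {1..8}"
proof -
  obtain a m where x: "x = (a, m)" by (cases x)
  with assms have "m \<in> {1,2,3,4,5,6,7,8}" by auto
  then show ?thesis unfolding x box_op_def by auto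
qed

lemma snd_box_op_134: "snd x \<in> {1,3,4} \<Longrightarrow> snd (box_op x) \<in> {1,3,4}"
  by (cases x) (auto simp: box_op_def)

lemma snd_eval_nat_range:
  assumes "\<forall>v. snd (env v) \<in> {1..8}"
  shows "snd (eval_nat I h env t) \<in> {1..8}"
proof (induction t)
  case (Bx a)
  then show ?case unfolding eval_nat.simps by (rule snd_box_op_range)
qed (use assms snd_heart_op_range in simp_all)

lemma fst_eval_nat_tree_prop:
  assumes "tree_prop t" and "\<forall>v. fst (env v) = b"
  shows "fst (eval_nat I h env t) = b"
  using assms
  by (induction t) (auto simp: not_tree_prop_Op dest: tree_prop_HrtD tree_prop_BxD)

lemma snd_eval_nat_tree_prop_134:
  assumes "tree_prop t" and "\<forall>v. snd (env v) \<in> {1,3,4}"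
  shows "snd (eval_nat I h env t) \<in> {1,3,4}"
  using assms(1)
proof (induction t)
  case (Op f ts)
  then show ?case by (simp add: not_tree_prop_Op)
next
  case (Hrt a b c)
  then show ?case
    unfolding eval_nat.simps using tree_prop_HrtD[OF Hrt.prems] by (intro snd_heart_op_134) simp_all
next
  case (Bx a)
  then show ?case
    unfolding eval_nat.simps using tree_prop_BxD[OF Bx.prems] by (intro snd_box_op_134) simp
qed (use assms(2) in simp)

theorem lemma6p3:
  fixes ar :: "'f \<Rightarrow> nat" and I :: "'f \<Rightarrow> 'a list \<Rightarrow> 'a" and h :: "'a \<Rightarrow> 'a"
    and \<phi> :: "'f fterm" and b :: 'a and k :: nat
  assumes nontrivial: "\<exists>x y :: 'a. x \<noteq> y"
    and no_constants: "\<forall>f. 0 < ar f"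
    and wf: "wf_term ar \<phi>"
    and tp: "tree_prop \<phi>"
    and k: "k \<in> {1..8}"
  shows "(\<exists>m. 1 \<le> m \<and> m \<le> 8 \<and> eval_nat I h (\<lambda>_. (b, k)) \<phi> = (b, m))
       \<and> (k \<in> {1,3,4} \<longrightarrow> eval_nat I h (\<lambda>_. (b, k)) \<phi> \<in> {(b,1), (b,3), (b,4)})"
proof -
  obtain c m where val: "eval_nat I h (\<lambda>_. (b, k)) \<phi> = (c, m)" by fastforce
  have "c = b" using fst_eval_nat_tree_prop[OF tp, of "\<lambda>_. (b, k)" b I h] val by simp
  moreover have "m \<in> {1..8}" using snd_eval_nat_range[of "\<lambda>_. (b, k)" I h \<phi>] k val by simp
  moreover have "k \<in> {1,3,4} \<Longrightarrow> m \<in> {1,3,4}"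
    using snd_eval_nat_tree_prop_134[OF tp, of "\<lambda>_. (b, k)" I h] val by simp
  ultimately show ?thesis using val by auto
qed

end
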